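(* Let $\Gamma^J=SL_2(\mathbb Z)\ltimes\mathbb Z^2$ be the full Jacobi group (pairs $(M,X)$, $M\in SL_2(\mathbb Z)$, $X\in\mathbb Z^2$ a row vector, with $(M,X)(M',X')=(MM',XM'+X')$), and consider the split extension $0\to\mathbb Z^2\xrightarrow{i}\Gamma^J\xrightarrow{\rho}SL_2(\mathbb Z)\to0$ with $i(X)=(I,X)$, $\rho(M,X)=M$. Then, with trivial integer coefficients, the induced sequence $$0\to H^2(SL_2(\mathbb Z))\xrightarrow{\rho^*}H^2(\Gamma^J)\xrightarrow{i^*}H^2(\mathbb Z^2)\to0$$ is exact and splits. *)

theory Defs
  imports "HOL-Analysis.Analysis" "HOL-Algebra.Algebra"
begin

definition cochain2_grp :: "('a,'b) monoid_scheme \<Rightarrow> (('a \<times> 'a) \<Rightarrow> int) monoid" where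
  "cochain2_grp G = \<lparr>carrier = extensional (carrier G \<times> carrier G),
     mult = (\<lambda>f g. restrict (\<lambda>p. f p + g p) (carrier G \<times> carrier G)),
     one = restrict (\<lambda>p. 0) (carrier G \<times> carrier G)\<rparr>"

definition cocycle2 :: "('a,'b) monoid_scheme \<Rightarrow> (('a \<times> 'a) \<Rightarrow> int) \<Rightarrow> bool" where
  "cocycle2 G f \<longleftrightarrow> f \<in> extensional (carrier G \<times> carrier G) \<and>
     (\<forall>g\<in>carrier G. \<forall>h\<in>carrier G. \<forall>k\<in>carrier G.
        f (h, k) - f (g \<otimes>\<^bsub>G\<^esub> h, k) + f (g, h \<otimes>\<^bsub>G\<^esub> k) - f (g, h) = 0)"

definition coboundary2 :: "('a,'b) monoid_scheme \<Rightarrow> (('a \<times> 'a) \<Rightarrow> int) \<Rightarrow> bool" where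
  "coboundary2 G f \<longleftrightarrow> f \<in> extensional (carrier G \<times> carrier G) \<and>
     (\<exists>\<phi> :: 'a \<Rightarrow> int. \<forall>g\<in>carrier G. \<forall>h\<in>carrier G.
        f (g, h) = \<phi> h - \<phi> (g \<otimes>\<^bsub>G\<^esub> h) + \<phi> g)"

definition Z2grp :: "('a,'b) monoid_scheme \<Rightarrow> (('a \<times> 'a) \<Rightarrow> int) monoid" where
  "Z2grp G = (cochain2_grp G) \<lparr>carrier := {f. cocycle2 G f}\<rparr>"

definition H2 :: "('a,'b) monoid_scheme \<Rightarrow> (('a \<times> 'a) \<Rightarrow> int) set monoid" where
  "H2 G = Z2grp G Mod {f. coboundary2 G f}"

definition pull2 :: "('a,'b) monoid_scheme \<Rightarrow> ('a \<Rightarrow> 'c) \<Rightarrow> (('c \<times> 'c) \<Rightarrow> int) \<Rightarrow> (('a \<times> 'a) \<Rightarrow> int)" where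
  "pull2 G \<alpha> f = restrict (\<lambda>(x, y). f (\<alpha> x, \<alpha> y)) (carrier G \<times> carrier G)"

definition H2_map :: "('a,'b) monoid_scheme \<Rightarrow> ('a \<Rightarrow> 'c) \<Rightarrow> (('c \<times> 'c) \<Rightarrow> int) set \<Rightarrow> (('a \<times> 'a) \<Rightarrow> int) set" where
  "H2_map G \<alpha> C = (\<Union>f\<in>C. {u. coboundary2 G u} #>\<^bsub>Z2grp G\<^esub> pull2 G \<alpha> f)"

definition SL2Z :: "(int^2^2) monoid" where
  "SL2Z = \<lparr>carrier = {M. det M = 1}, mult = (\<lambda>M N. M ** N), one = mat 1\<rparr>"

definition Jacobi :: "((int^2^2) \<times> (int^2)) monoid" where
  "Jacobi = \<lparr>carrier = {P. det (fst P) = 1},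
     mult = (\<lambda>P Q. (fst P ** fst Q, (snd P v* fst Q) + snd Q)),
     one = (mat 1, 0)\<rparr>"

definition Zsq :: "(int^2) monoid" where
  "Zsq = \<lparr>carrier = UNIV, mult = (+), one = 0\<rparr>"

definition iJ :: "int^2 \<Rightarrow> (int^2^2) \<times> (int^2)" where
  "iJ v = (mat 1, v)"

definition rhoJ :: "(int^2^2) \<times> (int^2) \<Rightarrow> int^2^2" where
  "rhoJ P = fst P"

end

theory Submission
  imports Defs
begin

text \<open>
  The map \<open>\<sigma>(M) = (M, 0)\<close> is a section of \<open>\<rho>\<close>, so \<open>\<sigma>\<^sup>* \<rho>\<^sup>* = id\<close> and \<open>\<rho>\<^sup>*\<close> is injective; \<open>\<rho> \<circ> i\<close>
  is trivial, so \<open>i\<^sup>* \<rho>\<^sup>* = 0\<close>.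

  Conversely, let \<open>f\<close> be a cocycle on \<open>\<Gamma>\<^sup>J\<close> whose restriction to the translations \<open>\<int>\<^sup>2\<close> is a
  coboundary. Subtracting \<open>\<rho>\<^sup>* \<sigma>\<^sup>* f\<close> and two further coboundaries, \<open>f\<close> becomes a cocycle vanishing
  on \<open>\<sigma>(SL\<^sub>2(\<int>))\<^sup>2\<close>, on \<open>(\<int>\<^sup>2)\<^sup>2\<close> and on \<open>\<sigma>(SL\<^sub>2(\<int>)) \<times> \<int>\<^sup>2\<close>. Such a cocycle has the form
  \<open>((M, x), (N, y)) \<mapsto> b(x, N)\<close> with \<open>b\<close> a crossed homomorphism from \<open>SL\<^sub>2(\<int>)\<close> to \<open>Hom(\<int>\<^sup>2, \<int>)\<close>.
  Since \<open>-I\<close> is central and acts by \<open>-1\<close>, \<open>2b\<close> is principal, and the generators \<open>T\<close> and \<open>S\<close>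
  show that the factor \<open>2\<close> can be divided out; so \<open>b\<close> and hence \<open>f - \<rho>\<^sup>* \<sigma>\<^sup>* f\<close> are coboundaries.

  Finally, the commutator of the lifts of \<open>e\<^sub>1, e\<^sub>2\<close> identifies \<open>H\<^sup>2(\<int>\<^sup>2)\<close> with \<open>\<int>\<close> (a symmetric
  cocycle defines an abelian extension of the free abelian group \<open>\<int>\<^sup>2\<close>, which splits), with
  generator the Heisenberg cocycle \<open>x\<^sub>1 y\<^sub>2\<close>. An explicit cocycle on \<open>\<Gamma>\<^sup>J\<close> restricts to it, and its
  multiples define the splitting of \<open>i\<^sup>*\<close>.
\<close>

section \<open>Inhomogeneous 2-cochains\<close>

definition delta :: "('a,'b) monoid_scheme \<Rightarrow> ('a \<Rightarrow> int) \<Rightarrow> 'a \<times> 'a \<Rightarrow> int" where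
  "delta G \<phi> = (\<lambda>(g, h). \<phi> h - \<phi> (g \<otimes>\<^bsub>G\<^esub> h) + \<phi> g)"

text \<open>The conditions of \<open>cocycle2\<close> and \<open>coboundary2\<close> without extensionality, which makes
  them stable under pointwise operations on cochains.\<close>
definition cocycle :: "('a,'b) monoid_scheme \<Rightarrow> ('a \<times> 'a \<Rightarrow> int) \<Rightarrow> bool" where
  "cocycle G f \<longleftrightarrow> (\<forall>g\<in>carrier G. \<forall>h\<in>carrier G. \<forall>k\<in>carrier G.
     f (h, k) - f (g \<otimes>\<^bsub>G\<^esub> h, k) + f (g, h \<otimes>\<^bsub>G\<^esub> k) - f (g, h) = 0)"

definition coboundary :: "('a,'b) monoid_scheme \<Rightarrow> ('a \<times> 'a \<Rightarrow> int) \<Rightarrow> bool" where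
  "coboundary G f \<longleftrightarrow> (\<exists>\<phi>. \<forall>g\<in>carrier G. \<forall>h\<in>carrier G. f (g, h) = delta G \<phi> (g, h))"

abbreviation B2 :: "('a,'b) monoid_scheme \<Rightarrow> ('a \<times> 'a \<Rightarrow> int) set" where
  "B2 G \<equiv> {f. coboundary2 G f}"

abbreviation H2_class :: "('a,'b) monoid_scheme \<Rightarrow> ('a \<times> 'a \<Rightarrow> int) \<Rightarrow> ('a \<times> 'a \<Rightarrow> int) set" where
  "H2_class G f \<equiv> B2 G #>\<^bsub>Z2grp G\<^esub> f"

lemma delta_apply [simp]: "delta G \<phi> (g, h) = \<phi> h - \<phi> (g \<otimes>\<^bsub>G\<^esub> h) + \<phi> g"
  by (simp add: delta_def)

lemma cocycle2_iff: "cocycle2 G f \<longleftrightarrow> f \<in> extensional (carrier G \<times> carrier G) \<and> cocycle G f"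
  by (simp add: cocycle2_def cocycle_def)

lemma coboundary2_iff: "coboundary2 G f \<longleftrightarrow> f \<in> extensional (carrier G \<times> carrier G) \<and> coboundary G f"
  by (simp add: coboundary2_def coboundary_def)

lemma cocycleD:
  "cocycle G f \<Longrightarrow> g \<in> carrier G \<Longrightarrow> h \<in> carrier G \<Longrightarrow> k \<in> carrier G \<Longrightarrow>
    f (h, k) - f (g \<otimes>\<^bsub>G\<^esub> h, k) + f (g, h \<otimes>\<^bsub>G\<^esub> k) - f (g, h) = 0"
  by (simp add: cocycle_def)

lemma Z2grp_simps [simp]:
  "carrier (Z2grp G) = {f. cocycle2 G f}"
  "f \<otimes>\<^bsub>Z2grp G\<^esub> f' = restrict (\<lambda>p. f p + f' p) (carrier G \<times> carrier G)"
  "\<one>\<^bsub>Z2grp G\<^esub> = restrict (\<lambda>p. 0) (carrier G \<times> carrier G)"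
  by (simp_all add: Z2grp_def cochain2_grp_def)

lemma cocycle_cong:
  assumes "monoid G" "cocycle G f" "\<And>g h. g \<in> carrier G \<Longrightarrow> h \<in> carrier G \<Longrightarrow> f' (g, h) = f (g, h)"
  shows "cocycle G f'"
  using assms by (simp add: cocycle_def monoid.m_closed)

lemma coboundary_cong:
  assumes "coboundary G f" "\<And>g h. g \<in> carrier G \<Longrightarrow> h \<in> carrier G \<Longrightarrow> f' (g, h) = f (g, h)"
  shows "coboundary G f'"
  using assms by (simp add: coboundary_def)

lemma cocycle_add:
  assumes "cocycle G f" "cocycle G f'" shows "cocycle G (\<lambda>p. f p + f' p)"
  unfolding cocycle_def
proof (intro ballI)
  fix g h k assume ghk: "g \<in> carrier G" "h \<in> carrier G" "k \<in> carrier G"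
  show "f (h, k) + f' (h, k) - (f (g \<otimes>\<^bsub>G\<^esub> h, k) + f' (g \<otimes>\<^bsub>G\<^esub> h, k))
      + (f (g, h \<otimes>\<^bsub>G\<^esub> k) + f' (g, h \<otimes>\<^bsub>G\<^esub> k)) - (f (g, h) + f' (g, h)) = 0"
    using cocycleD[OF assms(1) ghk] cocycleD[OF assms(2) ghk] by linarith
qed

lemma cocycle_scale: "cocycle G f \<Longrightarrow> cocycle G (\<lambda>p. k * f p)"
  by (simp add: cocycle_def flip: right_diff_distrib distrib_left)

lemma cocycle_diff:
  assumes "cocycle G f" "cocycle G f'" shows "cocycle G (\<lambda>p. f p - f' p)"
  unfolding cocycle_def
proof (intro ballI)
  fix g h k assume ghk: "g \<in> carrier G" "h \<in> carrier G" "k \<in> carrier G"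
  show "f (h, k) - f' (h, k) - (f (g \<otimes>\<^bsub>G\<^esub> h, k) - f' (g \<otimes>\<^bsub>G\<^esub> h, k))
      + (f (g, h \<otimes>\<^bsub>G\<^esub> k) - f' (g, h \<otimes>\<^bsub>G\<^esub> k)) - (f (g, h) - f' (g, h)) = 0"
    using cocycleD[OF assms(1) ghk] cocycleD[OF assms(2) ghk] by linarith
qed

lemma coboundary_delta: "coboundary G (delta G \<phi>)"
  by (auto simp: coboundary_def)

lemma coboundary_const: "coboundary G (\<lambda>p. c)"
  by (auto simp: coboundary_def intro: exI[of _ "\<lambda>_. c"])

lemma coboundary_add:
  assumes "coboundary G f" "coboundary G f'" shows "coboundary G (\<lambda>p. f p + f' p)"
proof -
  obtain \<phi> \<phi>' where "\<forall>g\<in>carrier G. \<forall>h\<in>carrier G. f (g, h) = delta G \<phi> (g, h)"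
    and "\<forall>g\<in>carrier G. \<forall>h\<in>carrier G. f' (g, h) = delta G \<phi>' (g, h)"
    using assms by (auto simp: coboundary_def)
  then show ?thesis
    by (auto simp: coboundary_def intro!: exI[of _ "\<lambda>g. \<phi> g + \<phi>' g"])
qed

lemma coboundary_diff:
  assumes "coboundary G f" "coboundary G f'" shows "coboundary G (\<lambda>p. f p - f' p)"
proof -
  obtain \<phi> \<phi>' where "\<forall>g\<in>carrier G. \<forall>h\<in>carrier G. f (g, h) = delta G \<phi> (g, h)"
    and "\<forall>g\<in>carrier G. \<forall>h\<in>carrier G. f' (g, h) = delta G \<phi>' (g, h)"
    using assms by (auto simp: coboundary_def)
  then show ?thesis
    by (auto simp: coboundary_def intro!: exI[of _ "\<lambda>g. \<phi> g - \<phi>' g"])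
qed

lemma cocycle_delta:
  assumes "monoid G" shows "cocycle G (delta G \<phi>)"
  using assms by (simp add: cocycle_def monoid.m_closed monoid.m_assoc)

lemma coboundary_imp_cocycle:
  assumes "monoid G" "coboundary G f" shows "cocycle G f"
proof -
  obtain \<phi> where "\<forall>g\<in>carrier G. \<forall>h\<in>carrier G. f (g, h) = delta G \<phi> (g, h)"
    using assms(2) by (auto simp: coboundary_def)
  then show ?thesis
    using cocycle_cong[OF assms(1) cocycle_delta[OF assms(1)]] by blast
qed

lemma cocycle2_restrict:
  "monoid G \<Longrightarrow> cocycle G f \<Longrightarrow> cocycle2 G (restrict f (carrier G \<times> carrier G))"
  by (auto simp: cocycle2_iff elim: cocycle_cong)

lemma coboundary2_restrict:
  "coboundary G f \<Longrightarrow> coboundary2 G (restrict f (carrier G \<times> carrier G))"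
  by (auto simp: coboundary2_iff elim: coboundary_cong)

lemma comm_group_Z2grp:
  assumes G: "monoid G" shows "comm_group (Z2grp G)"
proof (rule comm_groupI)
  fix f f' assume "f \<in> carrier (Z2grp G)" "f' \<in> carrier (Z2grp G)"
  then have "cocycle G f" "cocycle G f'" by (simp_all add: cocycle2_iff)
  then show "f \<otimes>\<^bsub>Z2grp G\<^esub> f' \<in> carrier (Z2grp G)"
    using cocycle2_restrict[OF G cocycle_add] by simp
next
  show "\<one>\<^bsub>Z2grp G\<^esub> \<in> carrier (Z2grp G)"
    using cocycle2_restrict[OF G, of "\<lambda>p. 0"] by (simp add: cocycle_def)
next
  fix f assume "f \<in> carrier (Z2grp G)"
  then have f: "cocycle G f" "f \<in> extensional (carrier G \<times> carrier G)"
    by (simp_all add: cocycle2_iff)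
  show "\<one>\<^bsub>Z2grp G\<^esub> \<otimes>\<^bsub>Z2grp G\<^esub> f = f"
    using f(2) by (auto simp: extensional_def)
  show "\<exists>f'\<in>carrier (Z2grp G). f' \<otimes>\<^bsub>Z2grp G\<^esub> f = \<one>\<^bsub>Z2grp G\<^esub>"
    using cocycle2_restrict[OF G cocycle_scale[OF f(1), of "-1"]]
    by (intro bexI[of _ "restrict (\<lambda>p. - f p) (carrier G \<times> carrier G)"]) auto
qed (auto simp: fun_eq_iff)

lemma subgroup_B2:
  assumes G: "monoid G" shows "subgroup (B2 G) (Z2grp G)"
proof -
  interpret Z: comm_group "Z2grp G" by (rule comm_group_Z2grp[OF G])
  show ?thesis
  proof (rule Z.subgroupI)
    show "B2 G \<subseteq> carrier (Z2grp G)"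
      by (auto simp: coboundary2_iff cocycle2_iff coboundary_imp_cocycle[OF G])
    show "B2 G \<noteq> {}"
      using coboundary2_restrict[OF coboundary_const] by blast
  next
    fix f assume f: "f \<in> B2 G"
    let ?f' = "restrict (\<lambda>p. - f p) (carrier G \<times> carrier G)"
    have "f \<in> carrier (Z2grp G)" "?f' \<in> carrier (Z2grp G)"
      using f cocycle2_restrict[OF G cocycle_scale, of f "-1"]
      by (auto simp: coboundary2_iff cocycle2_iff coboundary_imp_cocycle[OF G])
    moreover have "?f' \<otimes>\<^bsub>Z2grp G\<^esub> f = \<one>\<^bsub>Z2grp G\<^esub>" by auto
    ultimately have "inv\<^bsub>Z2grp G\<^esub> f = ?f'" using Z.inv_equality by blast
    then show "inv\<^bsub>Z2grp G\<^esub> f \<in> B2 G"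
      using f coboundary2_restrict[OF coboundary_diff[OF coboundary_const[of G 0]], of f]
      by (simp add: coboundary2_iff)
  next
    fix f f' assume "f \<in> B2 G" "f' \<in> B2 G"
    then have "coboundary G f" "coboundary G f'" by (simp_all add: coboundary2_iff)
    then show "f \<otimes>\<^bsub>Z2grp G\<^esub> f' \<in> B2 G"
      using coboundary2_restrict[OF coboundary_add] by simp
  qed
qed

lemma carrier_H2: "carrier (H2 G) = H2_class G ` {f. cocycle2 G f}"
  by (simp add: H2_def carrier_FactGroup)

lemma one_H2: "\<one>\<^bsub>H2 G\<^esub> = B2 G"
  by (simp add: H2_def)

lemma mult_H2_class:
  assumes "monoid G" "cocycle2 G f" "cocycle2 G f'"
  shows "H2_class G f \<otimes>\<^bsub>H2 G\<^esub> H2_class G f' = H2_class G (f \<otimes>\<^bsub>Z2grp G\<^esub> f')"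
proof -
  interpret normal "B2 G" "Z2grp G"
    using comm_group.subgroup_imp_normal[OF comm_group_Z2grp subgroup_B2] assms(1) by blast
  show ?thesis using assms(2,3) by (simp add: H2_def rcos_sum)
qed

lemma mem_H2_class_iff:
  assumes "monoid G" "cocycle2 G f" "cocycle2 G f'"
  shows "f' \<in> H2_class G f \<longleftrightarrow> coboundary G (\<lambda>p. f' p - f p)"
proof
  assume "f' \<in> H2_class G f"
  then obtain b where "coboundary2 G b" "f' = b \<otimes>\<^bsub>Z2grp G\<^esub> f"
    by (auto simp: r_coset_def)
  then show "coboundary G (\<lambda>p. f' p - f p)"
    by (auto simp: coboundary2_iff elim: coboundary_cong)
next
  assume "coboundary G (\<lambda>p. f' p - f p)"
  then have "coboundary2 G (restrict (\<lambda>p. f' p - f p) (carrier G \<times> carrier G))"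
    by (rule coboundary2_restrict)
  moreover have "f' = restrict (\<lambda>p. f' p - f p) (carrier G \<times> carrier G) \<otimes>\<^bsub>Z2grp G\<^esub> f"
    using assms(3) by (auto simp: cocycle2_iff extensional_def)
  ultimately show "f' \<in> H2_class G f"
    by (auto simp: r_coset_def)
qed

lemma H2_class_eq_iff:
  assumes G: "monoid G" and f: "cocycle2 G f" and f': "cocycle2 G f'"
  shows "H2_class G f' = H2_class G f \<longleftrightarrow> coboundary G (\<lambda>p. f' p - f p)"
proof -
  interpret Z: comm_group "Z2grp G" by (rule comm_group_Z2grp[OF G])
  have "H2_class G f' = H2_class G f \<longleftrightarrow> f' \<in> H2_class G f"
    using Z.repr_independenceD[OF subgroup_B2[OF G], of f' f]
      Z.repr_independence[OF _ _ subgroup_B2[OF G], of f' f] f f' by auto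
  then show ?thesis using mem_H2_class_iff[OF G f f'] by simp
qed

lemma self_mem_H2_class: "monoid G \<Longrightarrow> cocycle2 G f \<Longrightarrow> f \<in> H2_class G f"
  using mem_H2_class_iff[of G f f] coboundary_const[of G 0] by simp

lemma cocycle2_if_mem_H2_class:
  assumes G: "monoid G" and "cocycle2 G f" "f' \<in> H2_class G f"
  shows "cocycle2 G f'"
proof -
  interpret Z: comm_group "Z2grp G" by (rule comm_group_Z2grp[OF G])
  show ?thesis
    using Z.r_coset_subset_G[OF subgroup.subset[OF subgroup_B2[OF G]]] assms(2,3) by auto
qed

lemma H2_class_eq_one_iff:
  assumes G: "monoid G" and f: "cocycle2 G f"
  shows "H2_class G f = \<one>\<^bsub>H2 G\<^esub> \<longleftrightarrow> coboundary G f"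
proof
  assume "H2_class G f = \<one>\<^bsub>H2 G\<^esub>"
  then show "coboundary G f"
    using self_mem_H2_class[OF G f] by (simp add: one_H2 coboundary2_iff)
next
  assume "coboundary G f"
  then have "f \<in> B2 G" using f by (simp add: cocycle2_iff coboundary2_iff)
  then show "H2_class G f = \<one>\<^bsub>H2 G\<^esub>"
    using subgroup.rcos_const[OF subgroup_B2[OF G] comm_group.axioms(2)[OF comm_group_Z2grp[OF G]]]
    by (simp add: one_H2)
qed

section \<open>Functoriality of \<open>H\<^sup>2\<close>\<close>

lemma pull2_apply [simp]: "g \<in> carrier G \<Longrightarrow> h \<in> carrier G \<Longrightarrow> pull2 G \<alpha> f (g, h) = f (\<alpha> g, \<alpha> h)"
  by (simp add: pull2_def)

lemma pull2_extensional: "pull2 G \<alpha> f \<in> extensional (carrier G \<times> carrier G)"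
  by (simp add: pull2_def)

lemma cocycle_pull2:
  assumes G: "monoid G" and \<alpha>: "\<alpha> \<in> hom G H" and f: "cocycle H f"
  shows "cocycle G (pull2 G \<alpha> f)"
  unfolding cocycle_def
proof (intro ballI)
  fix g h k assume ghk: "g \<in> carrier G" "h \<in> carrier G" "k \<in> carrier G"
  then have "f (\<alpha> h, \<alpha> k) - f (\<alpha> g \<otimes>\<^bsub>H\<^esub> \<alpha> h, \<alpha> k) + f (\<alpha> g, \<alpha> h \<otimes>\<^bsub>H\<^esub> \<alpha> k) - f (\<alpha> g, \<alpha> h) = 0"
    using \<alpha> by (intro cocycleD[OF f]) (auto simp: hom_in_carrier)
  then show "pull2 G \<alpha> f (h, k) - pull2 G \<alpha> f (g \<otimes>\<^bsub>G\<^esub> h, k)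
      + pull2 G \<alpha> f (g, h \<otimes>\<^bsub>G\<^esub> k) - pull2 G \<alpha> f (g, h) = 0"
    using ghk \<alpha> by (simp add: monoid.m_closed[OF G] hom_mult)
qed

lemma cocycle2_pull2:
  "monoid G \<Longrightarrow> \<alpha> \<in> hom G H \<Longrightarrow> cocycle2 H f \<Longrightarrow> cocycle2 G (pull2 G \<alpha> f)"
  by (simp add: cocycle2_iff pull2_extensional cocycle_pull2)

lemma coboundary_pull2:
  assumes \<alpha>: "\<alpha> \<in> hom G H" and f: "coboundary H f"
  shows "coboundary G (pull2 G \<alpha> f)"
proof -
  obtain \<phi> where \<phi>: "\<forall>x\<in>carrier H. \<forall>y\<in>carrier H. f (x, y) = delta H \<phi> (x, y)"
    using f by (auto simp: coboundary_def)
  have "pull2 G \<alpha> f (g, h) = delta G (\<phi> \<circ> \<alpha>) (g, h)" if "g \<in> carrier G" "h \<in> carrier G" for g h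
    using that \<alpha> \<phi> by (simp add: hom_mult hom_in_carrier)
  then show ?thesis by (auto simp: coboundary_def)
qed

lemma pull2_mult:
  assumes "\<alpha> \<in> hom G H"
  shows "pull2 G \<alpha> (f \<otimes>\<^bsub>Z2grp H\<^esub> f') = pull2 G \<alpha> f \<otimes>\<^bsub>Z2grp G\<^esub> pull2 G \<alpha> f'"
  using assms by (auto simp: pull2_def fun_eq_iff hom_in_carrier)

lemma H2_map_class:
  assumes G: "monoid G" and H: "monoid H" and \<alpha>: "\<alpha> \<in> hom G H" and f: "cocycle2 H f"
  shows "H2_map G \<alpha> (H2_class H f) = H2_class G (pull2 G \<alpha> f)"
proof -
  have "H2_class G (pull2 G \<alpha> f') = H2_class G (pull2 G \<alpha> f)" if f': "f' \<in> H2_class H f" for f'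
  proof -
    have f'_cocycle: "cocycle2 H f'" by (rule cocycle2_if_mem_H2_class[OF H f f'])
    then have "coboundary H (\<lambda>p. f' p - f p)" using mem_H2_class_iff[OF H f] f' by simp
    then have "coboundary G (pull2 G \<alpha> (\<lambda>p. f' p - f p))" by (rule coboundary_pull2[OF \<alpha>])
    then have "coboundary G (\<lambda>p. pull2 G \<alpha> f' p - pull2 G \<alpha> f p)"
      by (rule coboundary_cong) simp
    then show ?thesis
      using H2_class_eq_iff[OF G cocycle2_pull2[OF G \<alpha> f] cocycle2_pull2[OF G \<alpha> f'_cocycle]] by simp
  qed
  then show ?thesis
    using self_mem_H2_class[OF H f] unfolding H2_map_def by blast
qed

lemma H2_map_hom:
  assumes G: "monoid G" and H: "monoid H" and \<alpha>: "\<alpha> \<in> hom G H"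
  shows "H2_map G \<alpha> \<in> hom (H2 H) (H2 G)"
proof (rule homI)
  fix C assume "C \<in> carrier (H2 H)"
  then obtain f where "cocycle2 H f" "C = H2_class H f" by (auto simp: carrier_H2)
  then show "H2_map G \<alpha> C \<in> carrier (H2 G)"
    by (auto simp: carrier_H2 H2_map_class[OF G H \<alpha>] cocycle2_pull2[OF G \<alpha>])
next
  fix C D assume "C \<in> carrier (H2 H)" "D \<in> carrier (H2 H)"
  then obtain f f' where f: "cocycle2 H f" "C = H2_class H f"
    and f': "cocycle2 H f'" "D = H2_class H f'" by (auto simp: carrier_H2)
  have ff': "cocycle2 H (f \<otimes>\<^bsub>Z2grp H\<^esub> f')"
  proof -
    interpret Z: comm_group "Z2grp H" by (rule comm_group_Z2grp[OF H])
    show ?thesis using Z.m_closed[of f f'] f f' by simp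
  qed
  show "H2_map G \<alpha> (C \<otimes>\<^bsub>H2 H\<^esub> D) = H2_map G \<alpha> C \<otimes>\<^bsub>H2 G\<^esub> H2_map G \<alpha> D"
    unfolding f(2) f'(2) mult_H2_class[OF H f(1) f'(1)] H2_map_class[OF G H \<alpha> ff']
      H2_map_class[OF G H \<alpha> f(1)] H2_map_class[OF G H \<alpha> f'(1)] pull2_mult[OF \<alpha>]
      mult_H2_class[OF G cocycle2_pull2[OF G \<alpha> f(1)] cocycle2_pull2[OF G \<alpha> f'(1)]] ..
qed

lemma H2_map_comp:
  assumes K: "monoid K" and G: "monoid G" and H: "monoid H"
    and \<beta>: "\<beta> \<in> hom K G" and \<alpha>: "\<alpha> \<in> hom G H" and C: "C \<in> carrier (H2 H)"
  shows "H2_map K \<beta> (H2_map G \<alpha> C) = H2_map K (\<alpha> \<circ> \<beta>) C"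
proof -
  obtain f where f: "cocycle2 H f" "C = H2_class H f" using C by (auto simp: carrier_H2)
  have "pull2 K \<beta> (pull2 G \<alpha> f) = pull2 K (\<alpha> \<circ> \<beta>) f"
    using \<beta> by (auto simp: pull2_def fun_eq_iff hom_in_carrier)
  then show ?thesis
    using f hom_compose[OF \<beta> \<alpha>]
    by (simp add: H2_map_class[OF G H \<alpha>] H2_map_class[OF K G \<beta>] H2_map_class[OF K H]
        cocycle2_pull2[OF G \<alpha>])
qed

lemma H2_map_identity:
  assumes G: "monoid G" and id: "\<And>x. x \<in> carrier G \<Longrightarrow> \<alpha> x = x" and C: "C \<in> carrier (H2 G)"
  shows "H2_map G \<alpha> C = C"
proof -
  obtain f where f: "cocycle2 G f" "C = H2_class G f" using C by (auto simp: carrier_H2)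
  have "\<alpha> \<in> hom G G" using id by (auto intro!: homI simp: monoid.m_closed[OF G])
  moreover have "pull2 G \<alpha> f = f"
    using f(1) id by (auto simp: pull2_def cocycle2_iff extensional_def fun_eq_iff)
  ultimately show ?thesis using f by (simp add: H2_map_class[OF G G])
qed

lemma H2_map_trivial:
  assumes G: "monoid G" and H: "monoid H" and \<alpha>: "\<alpha> \<in> hom G H"
    and triv: "\<And>x. x \<in> carrier G \<Longrightarrow> \<alpha> x = \<one>\<^bsub>H\<^esub>" and C: "C \<in> carrier (H2 H)"
  shows "H2_map G \<alpha> C = \<one>\<^bsub>H2 G\<^esub>"
proof -
  obtain f where f: "cocycle2 H f" "C = H2_class H f" using C by (auto simp: carrier_H2)
  have "coboundary G (pull2 G \<alpha> f)"
    by (rule coboundary_cong[OF coboundary_const[of G "f (\<one>\<^bsub>H\<^esub>, \<one>\<^bsub>H\<^esub>)"]]) (simp add: triv)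
  then show ?thesis
    using f by (simp add: H2_map_class[OF G H \<alpha>] H2_class_eq_one_iff[OF G] cocycle2_pull2[OF G \<alpha>])
qed

lemma inj_on_H2_map_of_retraction:
  assumes G: "monoid G" and H: "monoid H" and \<rho>: "\<rho> \<in> hom G H" and \<sigma>: "\<sigma> \<in> hom H G"
    and retraction: "\<And>x. x \<in> carrier H \<Longrightarrow> \<rho> (\<sigma> x) = x"
  shows "inj_on (H2_map G \<rho>) (carrier (H2 H))"
proof (rule inj_on_inverseI)
  fix C assume "C \<in> carrier (H2 H)"
  then show "H2_map H \<sigma> (H2_map G \<rho> C) = C"
    by (simp add: H2_map_comp[OF H G H \<sigma> \<rho>] H2_map_identity[OF H] retraction)
qed

lemma H2_map_image_subset_kernel:
  assumes K: "monoid K" and G: "monoid G" and H: "monoid H"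
    and \<iota>: "\<iota> \<in> hom K G" and \<rho>: "\<rho> \<in> hom G H"
    and triv: "\<And>x. x \<in> carrier K \<Longrightarrow> \<rho> (\<iota> x) = \<one>\<^bsub>H\<^esub>"
  shows "H2_map G \<rho> ` carrier (H2 H) \<subseteq> kernel (H2 G) (H2 K) (H2_map K \<iota>)"
proof
  fix D assume "D \<in> H2_map G \<rho> ` carrier (H2 H)"
  then obtain C where C: "C \<in> carrier (H2 H)" "D = H2_map G \<rho> C" by blast
  have "D \<in> carrier (H2 G)"
    using C H2_map_hom[OF G H \<rho>] by (auto simp: hom_in_carrier)
  moreover have "H2_map K \<iota> D = \<one>\<^bsub>H2 K\<^esub>"
    using C by (simp add: H2_map_comp[OF K G H \<iota> \<rho>] H2_map_trivial[OF K H hom_compose[OF \<iota> \<rho>]] triv)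
  ultimately show "D \<in> kernel (H2 G) (H2 K) (H2_map K \<iota>)"
    by (simp add: kernel_def)
qed

section \<open>The second cohomology of \<open>\<int>\<^sup>2\<close>\<close>

lemma Zsq_simps [simp]: "carrier Zsq = UNIV" "x \<otimes>\<^bsub>Zsq\<^esub> y = x + y" "\<one>\<^bsub>Zsq\<^esub> = 0"
  by (simp_all add: Zsq_def)

lemma comm_monoid_Zsq: "comm_monoid Zsq"
  by (rule comm_monoidI) (simp_all add: add_ac)

definition e1 :: "int^2" where "e1 = vector [1, 0]"
definition e2 :: "int^2" where "e2 = vector [0, 1]"

lemma e1_e2_components [simp]: "e1$1 = 1" "e1$2 = 0" "e2$1 = 0" "e2$2 = 1"
  by (simp_all add: e1_def e2_def)

lemma vec2_eq_iff: "(u :: 'a^2) = w \<longleftrightarrow> u$1 = w$1 \<and> u$2 = w$2"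
  by (simp add: vec_eq_iff forall_2)

lemma additive_int_smult:
  fixes v :: "int^'n \<Rightarrow> int"
  assumes add: "\<And>u w. v (u + w) = v u + v w"
  shows "v (k *s u) = k * v u"
proof (induction k rule: int_induct[where k = 0])
  case base
  show ?case using add[of 0 0] by simp
next
  case (step1 i)
  then show ?case using add[of "i *s u" u] by (simp add: algebra_simps)
next
  case (step2 i)
  then show ?case using add[of "(i - 1) *s u" u] by (simp add: algebra_simps)
qed

lemma additive_int2_eq:
  fixes v :: "int^2 \<Rightarrow> int"
  assumes add: "\<And>u w. v (u + w) = v u + v w"
  shows "v u = u$1 * v e1 + u$2 * v e2"
proof -
  have "u = u$1 *s e1 + u$2 *s e2" by (simp add: vec2_eq_iff)
  then have "v u = v (u$1 *s e1) + v (u$2 *s e2)" using add by metis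
  then show ?thesis by (simp add: additive_int_smult[OF add])
qed

lemma cocycle_Zsq_iff:
  "cocycle Zsq f \<longleftrightarrow> (\<forall>x y z. f (y, z) - f (x + y, z) + f (x, y + z) - f (x, y) = 0)"
  by (simp add: cocycle_def)

lemma cocycle_antisym_add_right:
  assumes G: "comm_monoid G" and f: "cocycle G f"
    and x: "x \<in> carrier G" and y: "y \<in> carrier G" and z: "z \<in> carrier G"
  shows "f (x, y \<otimes>\<^bsub>G\<^esub> z) - f (y \<otimes>\<^bsub>G\<^esub> z, x) = (f (x, y) - f (y, x)) + (f (x, z) - f (z, x))"
proof -
  interpret comm_monoid G by (rule G)
  have comm: "y \<otimes>\<^bsub>G\<^esub> x = x \<otimes>\<^bsub>G\<^esub> y" "z \<otimes>\<^bsub>G\<^esub> x = x \<otimes>\<^bsub>G\<^esub> z"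
    "z \<otimes>\<^bsub>G\<^esub> y = y \<otimes>\<^bsub>G\<^esub> z"
    using x y z by (simp_all add: m_comm)
  show ?thesis
    using cocycleD[OF f x y z] cocycleD[OF f x z y] cocycleD[OF f y x z]
      cocycleD[OF f y z x] cocycleD[OF f z x y] cocycleD[OF f z y x]
    unfolding comm by linarith
qed

text \<open>In the central extension of \<open>\<int>\<^sup>2\<close> defined by a cocycle \<open>f\<close>, this is the commutator of the
  lifts of \<open>e1\<close> and \<open>e2\<close>; it identifies \<open>H\<^sup>2(\<int>\<^sup>2)\<close> with \<open>\<int>\<close>.\<close>
definition cocycle_commutator :: "((int^2) \<times> (int^2) \<Rightarrow> int) \<Rightarrow> int" where
  "cocycle_commutator f = f (e1, e2) - f (e2, e1)"

lemma cocycle_Zsq_antisym: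
  assumes f: "cocycle Zsq f"
  shows "f (x, y) - f (y, x) = cocycle_commutator f * (x$1 * y$2 - x$2 * y$1)"
proof -
  define c where "c x y = f (x, y) - f (y, x)" for x y
  have c_add: "c x (y + z) = c x y + c x z" for x y z
    using cocycle_antisym_add_right[OF comm_monoid_Zsq f] by (simp add: c_def)
  have c_linear: "c x y = y$1 * c x e1 + y$2 * c x e2" for x y
    by (rule additive_int2_eq) (rule c_add)
  have c_antisym: "c x y = - c y x" for x y by (simp add: c_def)
  have "c e1 e2 = cocycle_commutator f" by (simp add: c_def cocycle_commutator_def)
  moreover have "c x x = 0" for x by (simp add: c_def)
  ultimately have "c x y = (x$1 * y$2 - x$2 * y$1) * cocycle_commutator f"
    using c_linear[of x y] c_antisym[of x e1] c_antisym[of x e2]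
      c_linear[of e1 x] c_linear[of e2 x] c_antisym[of e2 e1]
    by (simp add: algebra_simps)
  then show ?thesis by (simp add: c_def algebra_simps)
qed

definition Zsq_extension :: "((int^2) \<times> (int^2) \<Rightarrow> int) \<Rightarrow> (int \<times> (int^2)) monoid" where
  "Zsq_extension f = \<lparr>carrier = UNIV,
     mult = (\<lambda>p q. (fst p + fst q + f (snd p, snd q), snd p + snd q)), one = (0, 0)\<rparr>"

lemma Zsq_extension_simps [simp]:
  "carrier (Zsq_extension f) = UNIV"
  "p \<otimes>\<^bsub>Zsq_extension f\<^esub> q = (fst p + fst q + f (snd p, snd q), snd p + snd q)"
  "\<one>\<^bsub>Zsq_extension f\<^esub> = (0, 0)"
  by (simp_all add: Zsq_extension_def)

lemma comm_group_Zsq_extension: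
  assumes f: "cocycle Zsq f" and sym: "\<And>x y. f (x, y) = f (y, x)" and norm: "\<And>y. f (0, y) = 0"
  shows "comm_group (Zsq_extension f)"
proof (rule comm_groupI)
  fix p q r :: "int \<times> (int^2)"
  show "p \<otimes>\<^bsub>Zsq_extension f\<^esub> q \<otimes>\<^bsub>Zsq_extension f\<^esub> r
      = p \<otimes>\<^bsub>Zsq_extension f\<^esub> (q \<otimes>\<^bsub>Zsq_extension f\<^esub> r)"
    using f[unfolded cocycle_Zsq_iff, rule_format,
        where x = "snd p" and y = "snd q" and z = "snd r"]
    by (simp add: add.assoc)
next
  fix p q :: "int \<times> (int^2)"
  show "p \<otimes>\<^bsub>Zsq_extension f\<^esub> q = q \<otimes>\<^bsub>Zsq_extension f\<^esub> p"
    using sym[of "snd p" "snd q"] by (simp add: add.commute)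
next
  fix p :: "int \<times> (int^2)"
  show "\<one>\<^bsub>Zsq_extension f\<^esub> \<otimes>\<^bsub>Zsq_extension f\<^esub> p = p" by (simp add: norm)
  show "\<exists>q\<in>carrier (Zsq_extension f). q \<otimes>\<^bsub>Zsq_extension f\<^esub> p = \<one>\<^bsub>Zsq_extension f\<^esub>"
    by (rule bexI[of _ "(- fst p - f (- snd p, snd p), - snd p)"]) auto
qed auto

lemma snd_int_pow_Zsq_extension:
  assumes "group (Zsq_extension f)"
  shows "snd (p [^]\<^bsub>Zsq_extension f\<^esub> (k :: int)) = k *s snd p"
proof -
  interpret group "Zsq_extension f" by (rule assms)
  have step: "p [^]\<^bsub>Zsq_extension f\<^esub> (i + 1)
      = p [^]\<^bsub>Zsq_extension f\<^esub> i \<otimes>\<^bsub>Zsq_extension f\<^esub> p" for i :: int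
    using int_pow_mult[of p i 1] by simp
  show ?thesis
  proof (induction k rule: int_induct[where k = 0])
    case (step2 i)
    then show ?case using step[of "i - 1"] by (simp add: algebra_simps)
  qed (simp_all add: step algebra_simps)
qed

text \<open>\<open>\<int>\<^sup>2\<close> is free abelian, so every abelian extension of it splits.\<close>
lemma Zsq_extension_splits:
  assumes "comm_group (Zsq_extension f)"
  shows "\<exists>s. \<forall>x y. snd (s x) = x \<and> s (x + y) = s x \<otimes>\<^bsub>Zsq_extension f\<^esub> s y"
proof -
  interpret E: comm_group "Zsq_extension f" by (rule assms)
  define s where "s x = (0, e1) [^]\<^bsub>Zsq_extension f\<^esub> (x$1) \<otimes>\<^bsub>Zsq_extension f\<^esub>
    (0, e2) [^]\<^bsub>Zsq_extension f\<^esub> (x$2)" for x :: "int^2"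
  have "snd (s x) = x" for x
    using snd_int_pow_Zsq_extension[OF E.is_group] by (simp add: s_def vec2_eq_iff)
  moreover have "s (x + y) = s x \<otimes>\<^bsub>Zsq_extension f\<^esub> s y" for x y
    by (simp only: s_def vector_add_component E.int_pow_mult E.m_ac UNIV_I Zsq_extension_simps(1))
  ultimately show ?thesis by blast
qed

lemma symmetric_cocycle_Zsq_coboundary:
  assumes f: "cocycle Zsq f" and sym: "\<And>x y. f (x, y) = f (y, x)"
  shows "coboundary Zsq f"
proof -
  define f0 where "f0 p = f p - f (0, 0)" for p
  have f0_cocycle: "cocycle Zsq f0"
    unfolding f0_def by (rule cocycle_diff[OF f]) (simp add: cocycle_def)
  have "f0 (0, y) = 0" for y
    using f[unfolded cocycle_Zsq_iff, rule_format, where x = 0 and y = 0 and z = y]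
    by (simp add: f0_def)
  then have "comm_group (Zsq_extension f0)"
    using comm_group_Zsq_extension[OF f0_cocycle] sym by (simp add: f0_def)
  then obtain s where s: "\<And>x. snd (s x) = x"
    and s_add: "\<And>x y. s (x + y) = s x \<otimes>\<^bsub>Zsq_extension f0\<^esub> s y"
    using Zsq_extension_splits by blast
  have "f0 (x, y) = fst (s (x + y)) - fst (s x) - fst (s y)" for x y
    using s_add[of x y] s[of x] s[of y] by simp
  then have "coboundary Zsq f0"
    by (auto simp: coboundary_def intro!: exI[of _ "\<lambda>x. - fst (s x)"])
  then have "coboundary Zsq (\<lambda>p. f0 p + f (0, 0))"
    by (rule coboundary_add[OF _ coboundary_const])
  then show ?thesis by (simp add: f0_def)
qed

definition heis_form :: "int^2 \<Rightarrow> int^2 \<Rightarrow> int" where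
  "heis_form x y = x$1 * y$2"

lemma cocycle_Zsq_cohomologous_heis_form:
  assumes f: "cocycle Zsq f"
  shows "coboundary Zsq (\<lambda>(x, y). f (x, y) - cocycle_commutator f * heis_form x y)"
proof (rule symmetric_cocycle_Zsq_coboundary)
  show "cocycle Zsq (\<lambda>(x, y). f (x, y) - cocycle_commutator f * heis_form x y)"
    using f by (simp add: cocycle_Zsq_iff heis_form_def algebra_simps)
  show "(\<lambda>(x, y). f (x, y) - cocycle_commutator f * heis_form x y) (x, y)
      = (\<lambda>(x, y). f (x, y) - cocycle_commutator f * heis_form x y) (y, x)" for x y
    using cocycle_Zsq_antisym[OF f, of x y] by (simp add: heis_form_def algebra_simps)
qed

lemma cocycle_commutator_coboundary: "coboundary Zsq f \<Longrightarrow> cocycle_commutator f = 0"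
  by (auto simp: coboundary_def cocycle_commutator_def add.commute)

lemma SL2Z_simps [simp]:
  "carrier SL2Z = {M. det M = 1}" "M \<otimes>\<^bsub>SL2Z\<^esub> N = M ** N" "\<one>\<^bsub>SL2Z\<^esub> = mat 1"
  by (simp_all add: SL2Z_def)

lemma Jacobi_simps [simp]:
  "carrier Jacobi = {P. det (fst P) = 1}"
  "P \<otimes>\<^bsub>Jacobi\<^esub> Q = (fst P ** fst Q, snd P v* fst Q + snd Q)"
  "\<one>\<^bsub>Jacobi\<^esub> = (mat 1, 0)"
  by (simp_all add: Jacobi_def)

lemma monoid_SL2Z: "monoid SL2Z"
  by (rule monoidI) (auto simp: det_mul matrix_mul_assoc)

lemma monoid_Jacobi: "monoid Jacobi"
  by (rule monoidI)
    (auto simp: det_mul matrix_mul_assoc vector_matrix_left_distrib vector_matrix_mul_assoc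
      add.assoc)

lemma monoid_Zsq: "monoid Zsq"
  using comm_monoid_Zsq by (rule comm_monoid.axioms(1))

definition sigmaJ :: "int^2^2 \<Rightarrow> (int^2^2) \<times> (int^2)" where
  "sigmaJ M = (M, 0)"

lemma rhoJ_hom: "rhoJ \<in> hom Jacobi SL2Z"
  by (auto intro!: homI simp: rhoJ_def)

lemma iJ_hom: "iJ \<in> hom Zsq Jacobi"
  by (auto intro!: homI simp: iJ_def)

lemma sigmaJ_hom: "sigmaJ \<in> hom SL2Z Jacobi"
  by (auto intro!: homI simp: sigmaJ_def)

lemma vector_matrix_mult_2_components:
  "((u :: int^2) v* M)$1 = u$1 * M$1$1 + u$2 * M$2$1"
  "((u :: int^2) v* M)$2 = u$1 * M$1$2 + u$2 * M$2$2"
  by (simp_all add: vector_matrix_mult_def sum_2)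

lemma SL2Z_crossed_hom_double:
  fixes b :: "int^2 \<Rightarrow> int^2^2 \<Rightarrow> int"
  assumes add: "\<And>M u w. det M = 1 \<Longrightarrow> b (u + w) M = b u M + b w M"
    and crossed: "\<And>M N u. det M = 1 \<Longrightarrow> det N = 1 \<Longrightarrow> b u (M ** N) = b u M + b (u v* M) N"
    and M: "det M = 1"
  shows "2 * b u M = b u (mat (-1)) - b (u v* M) (mat (-1))"
proof -
  have det_minus_one: "det (mat (-1) :: int^2^2) = 1" by (simp add: det_2 mat_def)
  have central: "mat (-1) ** M = M ** mat (-1)"
    by (simp add: vec_eq_iff forall_2 matrix_matrix_mult_def sum_2 mat_def)
  have minus_one_acts: "u v* mat (-1) = - u"
    by (simp add: vec2_eq_iff mat_def vector_matrix_mult_2_components)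
  have "b (- u) M = - b u M"
    using add[OF M, of u "- u"] add[OF M, of 0 0] by simp
  then have "b u (mat (-1) ** M) = b u (mat (-1)) - b u M"
    using crossed[OF det_minus_one M] minus_one_acts by simp
  moreover have "b u (M ** mat (-1)) = b u M + b (u v* M) (mat (-1))"
    using crossed[OF M det_minus_one] .
  ultimately show ?thesis using central by simp
qed

lemma SL2Z_crossed_hom_principal:
  fixes b :: "int^2 \<Rightarrow> int^2^2 \<Rightarrow> int"
  assumes add: "\<And>M u w. det M = 1 \<Longrightarrow> b (u + w) M = b u M + b w M"
    and crossed: "\<And>M N u. det M = 1 \<Longrightarrow> det N = 1 \<Longrightarrow> b u (M ** N) = b u M + b (u v* M) N"
  shows "\<exists>\<psi>. (\<forall>u w. \<psi> (u + w) = \<psi> u + \<psi> w) \<and> (\<forall>M u. det M = 1 \<longrightarrow> b u M = \<psi> u - \<psi> (u v* M))"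
proof -
  define v where "v u = b u (mat (-1))" for u
  have v_add: "v (u + w) = v u + v w" for u w
    unfolding v_def by (rule add) (simp add: det_2 mat_def)
  have double: "2 * b u M = v u - v (u v* M)" if "det M = 1" for u M
    unfolding v_def by (rule SL2Z_crossed_hom_double[OF add crossed that])
  define T :: "int^2^2" where "T = vector [vector [1, 1], vector [0, 1]]"
  define S :: "int^2^2" where "S = vector [vector [0, -1], vector [1, 0]]"
  have "e1 v* T = e1 + e2" "det T = 1"
    by (simp_all add: T_def det_2 vec2_eq_iff vector_matrix_mult_2_components)
  then have "2 * b e1 T = - v e2" using double[of T e1] v_add[of e1 e2] by simp
  then have even_e2: "even (v e2)" by presburger
  have "e2 v* S = e1" "det S = 1"
    by (simp_all add: S_def det_2 vec2_eq_iff vector_matrix_mult_2_components)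
  then have "2 * b e2 S = v e2 - v e1" using double[of S e2] by simp
  then have "even (v e1)" using even_e2 by presburger
  then have even_v: "even (v u)" for u
    using even_e2 additive_int2_eq[OF v_add, of u] by simp
  define \<psi> where "\<psi> u = v u div 2" for u
  have v_eq: "v u = 2 * \<psi> u" for u using even_v by (simp add: \<psi>_def)
  have "\<psi> (u + w) = \<psi> u + \<psi> w" for u w
    using v_add[of u w] unfolding v_eq by simp
  moreover have "b u M = \<psi> u - \<psi> (u v* M)" if "det M = 1" for u M
    using double[OF that, of u] unfolding v_eq by simp
  ultimately show ?thesis by blast
qed

section \<open>Cocycles on the Jacobi group\<close>

lemma cocycle_JacobiD:
  assumes "cocycle Jacobi g" "det M = 1" "det N = 1" "det K = 1"
  shows "g ((N, y), (K, z)) - g ((M ** N, x v* N + y), (K, z))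
    + g ((M, x), (N ** K, y v* K + z)) - g ((M, x), (N, y)) = 0"
  using cocycleD[OF assms(1), of "(M, x)" "(N, y)" "(K, z)"] assms(2-4) by simp

lemma normalised_Jacobi_cocycle_eq:
  assumes g: "cocycle Jacobi g"
    and on_sections: "\<And>M N. det M = 1 \<Longrightarrow> det N = 1 \<Longrightarrow> g ((M, 0), (N, 0)) = 0"
    and on_translations: "\<And>x y. g ((mat 1, x), (mat 1, y)) = 0"
    and mixed: "\<And>M x. det M = 1 \<Longrightarrow> g ((M, 0), (mat 1, x)) = 0"
    and M: "det M = 1" and N: "det N = 1"
  shows "g ((M, x), (N, y)) = g ((mat 1, x), (N, 0))"
proof -
  have right_translation: "g ((M', x'), (mat 1, y')) = 0" if "det M' = 1" for M' x' y'
    using cocycle_JacobiD[OF g that det_I det_I, where x = 0 and y = x' and z = y']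
      on_translations mixed[OF that]
    by simp
  have "g ((M, x), (N, y)) = g ((M, x), (N, 0))"
    using cocycle_JacobiD[OF g M N det_I, where x = x and y = 0 and z = y]
      mixed[OF N] right_translation[of "M ** N"] M N
    by (simp add: det_mul)
  moreover have "g ((M, 0), (N, x v* N)) = g ((M, 0), (N, 0))"
    using cocycle_JacobiD[OF g M N det_I, where x = 0 and y = 0 and z = "x v* N"]
      mixed[OF N] right_translation[of "M ** N"] M N
    by (simp add: det_mul)
  then have "g ((M, x), (N, 0)) = g ((mat 1, x), (N, 0))"
    using cocycle_JacobiD[OF g M det_I N, where x = 0 and y = x and z = 0]
      on_sections[OF M N] mixed[OF M]
    by simp
  ultimately show ?thesis by simp
qed

lemma normalised_Jacobi_cocycle_coboundary:
  assumes g: "cocycle Jacobi g"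
    and on_sections: "\<And>M N. det M = 1 \<Longrightarrow> det N = 1 \<Longrightarrow> g ((M, 0), (N, 0)) = 0"
    and on_translations: "\<And>x y. g ((mat 1, x), (mat 1, y)) = 0"
    and mixed: "\<And>M x. det M = 1 \<Longrightarrow> g ((M, 0), (mat 1, x)) = 0"
  shows "coboundary Jacobi g"
proof -
  define b where "b x N = g ((mat 1, x), (N, 0))" for x N
  have g_eq: "g ((M, x), (N, y)) = b x N" if "det M = 1" "det N = 1" for M N x y
    unfolding b_def
    by (rule normalised_Jacobi_cocycle_eq[OF g on_sections on_translations mixed that])
  have "b (x + y) N = b x N + b y N" if N: "det N = 1" for N x y
    using cocycle_JacobiD[OF g det_I det_I N, where x = x and y = y and z = 0] on_translations
    by (simp add: g_eq[OF det_I N])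
  moreover have "b x (M ** N) = b x M + b (x v* M) N" if M: "det M = 1" and N: "det N = 1" for M N x
    using cocycle_JacobiD[OF g det_I M N, where x = x and y = 0 and z = 0] on_sections[OF M N] M N
    by (simp add: g_eq det_mul)
  ultimately obtain \<psi> where \<psi>_add: "\<And>x y. \<psi> (x + y) = \<psi> x + \<psi> y"
    and b_eq: "\<And>M x. det M = 1 \<Longrightarrow> b x M = \<psi> x - \<psi> (x v* M)"
    using SL2Z_crossed_hom_principal[of b] by blast
  have "g (P, Q) = delta Jacobi (\<psi> \<circ> snd) (P, Q)"
    if "P \<in> carrier Jacobi" "Q \<in> carrier Jacobi" for P Q
    using that g_eq[of "fst P" "fst Q" "snd P" "snd Q"] b_eq[of "fst Q" "snd P"] \<psi>_add
    by (cases P, cases Q) simp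
  then show ?thesis unfolding coboundary_def by blast
qed

lemma Jacobi_cocycle_coboundary_on_translations:
  assumes f: "cocycle Jacobi f"
    and on_translations: "\<And>x y. f ((mat 1, x), (mat 1, y)) = delta Zsq \<psi> (x, y)"
  shows "coboundary Jacobi (\<lambda>(P, Q). f (P, Q) - f (sigmaJ (rhoJ P), sigmaJ (rhoJ Q)))"
    (is "coboundary Jacobi ?g")
proof -
  have "cocycle Jacobi (pull2 Jacobi (sigmaJ \<circ> rhoJ) f)"
    by (rule cocycle_pull2[OF monoid_Jacobi hom_compose[OF rhoJ_hom sigmaJ_hom] f])
  then have "cocycle Jacobi (\<lambda>(P, Q). f (sigmaJ (rhoJ P), sigmaJ (rhoJ Q)))"
    by (rule cocycle_cong[OF monoid_Jacobi]) simp
  from cocycle_diff[OF f this] have g: "cocycle Jacobi ?g"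
    by (simp add: case_prod_unfold)
  define \<phi>1 where "\<phi>1 P = \<psi> (snd P) - \<psi> 0" for P :: "(int^2^2) \<times> (int^2)"
  define g1 where "g1 p = ?g p - delta Jacobi \<phi>1 p" for p
  have g1: "cocycle Jacobi g1"
    unfolding g1_def by (rule cocycle_diff[OF g cocycle_delta[OF monoid_Jacobi]])
  have g1_sections: "g1 ((M, 0), (N, 0)) = 0" for M N
    by (simp add: g1_def \<phi>1_def sigmaJ_def rhoJ_def)
  have g1_translations: "g1 ((mat 1, x), (mat 1, y)) = 0" for x y
    using on_translations[of x y] on_translations[of 0 0]
    by (simp add: g1_def \<phi>1_def sigmaJ_def rhoJ_def)
  define \<phi>2 where "\<phi>2 P = g1 ((fst P, 0), (mat 1, snd P))" for P :: "(int^2^2) \<times> (int^2)"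
  define g2 where "g2 p = g1 p + delta Jacobi \<phi>2 p" for p
  have "coboundary Jacobi g2"
  proof (rule normalised_Jacobi_cocycle_coboundary)
    show "cocycle Jacobi g2"
      unfolding g2_def by (rule cocycle_add[OF g1 cocycle_delta[OF monoid_Jacobi]])
  qed (simp_all add: g2_def \<phi>2_def g1_sections g1_translations)
  then have "coboundary Jacobi (\<lambda>p. g2 p - delta Jacobi \<phi>2 p + delta Jacobi \<phi>1 p)"
    by (intro coboundary_add coboundary_diff coboundary_delta)
  then show ?thesis
    by (rule coboundary_cong) (simp add: g2_def g1_def)
qed

text \<open>\<open>heis_quad\<close> is a quadratic refinement of the symmetrisation of \<open>heis_form\<close>; the shift by
  \<open>(1, 1)\<close> makes \<open>heis_quad (x v* N) - heis_quad x\<close> even for \<open>N \<in> SL\<^sub>2(\<int>)\<close>, so the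
  division in \<open>heis_corr\<close> is exact.\<close>
definition heis_quad :: "int^2 \<Rightarrow> int" where
  "heis_quad z = (z$1 - 1) * (z$2 - 1)"

definition heis_corr :: "int^2^2 \<Rightarrow> int^2 \<Rightarrow> int" where
  "heis_corr N x = (heis_quad (x v* N) - heis_quad x) div 2"

definition jacobi_heis_cocycle :: "((int^2^2) \<times> (int^2)) \<times> ((int^2^2) \<times> (int^2)) \<Rightarrow> int" where
  "jacobi_heis_cocycle = (\<lambda>((M, x), (N, y)). heis_form (x v* N) y + heis_corr N x)"

lemma even_vector_matrix_mult_iff:
  fixes x :: "int^2" and N :: "int^2^2"
  assumes "det N = 1"
  shows "even ((x v* N)$1) \<and> even ((x v* N)$2) \<longleftrightarrow> even (x$1) \<and> even (x$2)"
proof -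
  define a b where "a = (x v* N)$1" and "b = (x v* N)$2"
  have ab: "a = x$1 * N$1$1 + x$2 * N$2$1" "b = x$1 * N$1$2 + x$2 * N$2$2"
    by (simp_all add: a_def b_def vector_matrix_mult_2_components)
  have "a * N$2$2 - b * N$2$1 = x$1 * det N" "b * N$1$1 - a * N$1$2 = x$2 * det N"
    by (simp_all add: ab det_2 algebra_simps)
  then have x: "x$1 = a * N$2$2 - b * N$2$1" "x$2 = b * N$1$1 - a * N$1$2"
    using assms by simp_all
  show ?thesis
    unfolding a_def[symmetric] b_def[symmetric]
  proof
    assume "even a \<and> even b" then show "even (x$1) \<and> even (x$2)" unfolding x by simp
  next
    assume "even (x$1) \<and> even (x$2)" then show "even a \<and> even b" unfolding ab by simp
  qed
qed

lemma heis_quad_diff_even: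
  fixes x :: "int^2" and N :: "int^2^2"
  assumes "det N = 1" shows "even (heis_quad (x v* N) - heis_quad x)"
  using even_vector_matrix_mult_iff[OF assms, of x] by (auto simp: heis_quad_def)

lemma heis_corr_double:
  "det N = 1 \<Longrightarrow> 2 * heis_corr N x = heis_quad (x v* N) - heis_quad x"
  using heis_quad_diff_even[of N x] by (simp add: heis_corr_def)

lemma heis_corr_one [simp]: "heis_corr (mat 1) x = 0"
  by (simp add: heis_corr_def)

lemma heis_corr_mult:
  assumes "det M = 1" "det N = 1"
  shows "heis_corr (M ** N) x = heis_corr M x + heis_corr N (x v* M)"
  using heis_corr_double[of "M ** N" x] heis_corr_double[OF assms(1), of x]
    heis_corr_double[OF assms(2), of "x v* M"] assms
  by (simp add: det_mul vector_matrix_mul_assoc)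

lemma heis_quad_add: "heis_quad (x + y) = heis_quad x + heis_quad y + x$1 * y$2 + x$2 * y$1 - 1"
  by (simp add: heis_quad_def algebra_simps)

lemma heis_form_add_left: "heis_form (x + x') y = heis_form x y + heis_form x' y"
  by (simp add: heis_form_def algebra_simps)

lemma heis_form_add_right: "heis_form x (y + y') = heis_form x y + heis_form x y'"
  by (simp add: heis_form_def algebra_simps)

lemma vector_matrix_mult_det_2:
  fixes x y :: "int^2" and N :: "int^2^2"
  shows "(x v* N)$1 * (y v* N)$2 - (x v* N)$2 * (y v* N)$1 = det N * (x$1 * y$2 - x$2 * y$1)"
  by (simp add: det_2 vector_matrix_mult_2_components algebra_simps)

text \<open>The defect \<open>heis_form (x v* N) (y v* N) - heis_form x y\<close> is symmetric in \<open>x, y\<close>, because the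
  antisymmetrisation of \<open>heis_form\<close> is the determinant, which \<open>SL\<^sub>2(\<int>)\<close> preserves.\<close>
lemma heis_corr_add:
  fixes x y :: "int^2"
  assumes N: "det N = 1"
  shows "heis_corr N (x + y)
    = heis_corr N x + heis_corr N y + heis_form (x v* N) (y v* N) - heis_form x y"
  using heis_corr_double[OF N, of "x + y", unfolded vector_matrix_left_distrib]
    heis_corr_double[OF N, of x] heis_corr_double[OF N, of y]
    heis_quad_add[of x y] heis_quad_add[of "x v* N" "y v* N"]
    vector_matrix_mult_det_2[of x N y, unfolded N mult_1]
  unfolding heis_form_def by linarith

lemma cocycle_jacobi_heis_cocycle: "cocycle Jacobi jacobi_heis_cocycle"
  unfolding cocycle_def
proof (intro ballI)
  fix P Q R assume "P \<in> carrier Jacobi" "Q \<in> carrier Jacobi" "R \<in> carrier Jacobi"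
  then obtain M x N y K z where PQR: "P = (M, x)" "Q = (N, y)" "R = (K, z)"
    and dets: "det N = 1" "det K = 1"
    by (cases P, cases Q, cases R) auto
  show "jacobi_heis_cocycle (Q, R) - jacobi_heis_cocycle (P \<otimes>\<^bsub>Jacobi\<^esub> Q, R)
      + jacobi_heis_cocycle (P, Q \<otimes>\<^bsub>Jacobi\<^esub> R) - jacobi_heis_cocycle (P, Q) = 0"
    using heis_corr_add[OF dets(2), of "x v* N" y] heis_corr_mult[OF dets, of x]
    by (simp add: PQR jacobi_heis_cocycle_def vector_matrix_left_distrib
        vector_matrix_mul_assoc[symmetric] heis_form_add_left heis_form_add_right)
qed

lemma jacobi_heis_cocycle_translations [simp]:
  "jacobi_heis_cocycle ((mat 1, x), (mat 1, y)) = heis_form x y"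
  by (simp add: jacobi_heis_cocycle_def)

section \<open>The exact sequence\<close>

lemma H2_kernel_subset_image:
  "kernel (H2 Jacobi) (H2 Zsq) (H2_map Zsq iJ) \<subseteq> H2_map Jacobi rhoJ ` carrier (H2 SL2Z)"
proof
  fix C assume "C \<in> kernel (H2 Jacobi) (H2 Zsq) (H2_map Zsq iJ)"
  then have C: "C \<in> carrier (H2 Jacobi)" and trivial: "H2_map Zsq iJ C = \<one>\<^bsub>H2 Zsq\<^esub>"
    by (simp_all add: kernel_def)
  obtain f where f: "cocycle2 Jacobi f" "C = H2_class Jacobi f"
    using C by (auto simp: carrier_H2)
  have "H2_class Zsq (pull2 Zsq iJ f) = \<one>\<^bsub>H2 Zsq\<^esub>"
    using trivial f by (simp add: H2_map_class[OF monoid_Zsq monoid_Jacobi iJ_hom])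
  then have "coboundary Zsq (pull2 Zsq iJ f)"
    by (simp add: H2_class_eq_one_iff[OF monoid_Zsq] cocycle2_pull2[OF monoid_Zsq iJ_hom f(1)])
  then obtain \<psi> where "\<And>x y. f ((mat 1, x), (mat 1, y)) = delta Zsq \<psi> (x, y)"
    by (auto simp: coboundary_def iJ_def)
  then have "coboundary Jacobi (\<lambda>(P, Q). f (P, Q) - f (sigmaJ (rhoJ P), sigmaJ (rhoJ Q)))"
    using f(1) by (intro Jacobi_cocycle_coboundary_on_translations) (simp_all add: cocycle2_iff)
  then have "coboundary Jacobi (\<lambda>p. f p - pull2 Jacobi rhoJ (pull2 SL2Z sigmaJ f) p)"
    by (rule coboundary_cong) (simp add: rhoJ_def sigmaJ_def)
  moreover have a: "cocycle2 SL2Z (pull2 SL2Z sigmaJ f)"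
    by (rule cocycle2_pull2[OF monoid_SL2Z sigmaJ_hom f(1)])
  ultimately have "C = H2_class Jacobi (pull2 Jacobi rhoJ (pull2 SL2Z sigmaJ f))"
    using f H2_class_eq_iff[OF monoid_Jacobi cocycle2_pull2[OF monoid_Jacobi rhoJ_hom a]] by simp
  also have "\<dots> = H2_map Jacobi rhoJ (H2_class SL2Z (pull2 SL2Z sigmaJ f))"
    by (simp add: H2_map_class[OF monoid_Jacobi monoid_SL2Z rhoJ_hom a])
  finally show "C \<in> H2_map Jacobi rhoJ ` carrier (H2 SL2Z)"
    using a by (auto simp: carrier_H2)
qed

definition H2_commutator :: "((int^2) \<times> (int^2) \<Rightarrow> int) set \<Rightarrow> int" where
  "H2_commutator C = cocycle_commutator (SOME f. f \<in> C)"

lemma H2_commutator_class: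
  assumes f: "cocycle2 Zsq f"
  shows "H2_commutator (H2_class Zsq f) = cocycle_commutator f"
proof -
  let ?g = "SOME g. g \<in> H2_class Zsq f"
  have g: "?g \<in> H2_class Zsq f"
    using self_mem_H2_class[OF monoid_Zsq f] by (rule someI[of "\<lambda>g. g \<in> H2_class Zsq f"])
  then have "coboundary Zsq (\<lambda>p. ?g p - f p)"
    using mem_H2_class_iff[OF monoid_Zsq f cocycle2_if_mem_H2_class[OF monoid_Zsq f g]] by simp
  then have "cocycle_commutator (\<lambda>p. ?g p - f p) = 0" by (rule cocycle_commutator_coboundary)
  then show ?thesis by (simp add: H2_commutator_def cocycle_commutator_def)
qed

definition jacobi_heis_multiple :: "int \<Rightarrow> ((int^2^2) \<times> (int^2)) \<times> ((int^2^2) \<times> (int^2)) \<Rightarrow> int" where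
  "jacobi_heis_multiple k =
     restrict (\<lambda>p. k * jacobi_heis_cocycle p) (carrier Jacobi \<times> carrier Jacobi)"

lemma cocycle2_jacobi_heis_multiple: "cocycle2 Jacobi (jacobi_heis_multiple k)"
  unfolding jacobi_heis_multiple_def
  by (rule cocycle2_restrict[OF monoid_Jacobi cocycle_scale[OF cocycle_jacobi_heis_cocycle]])

definition H2_section :: "((int^2) \<times> (int^2) \<Rightarrow> int) set
    \<Rightarrow> (((int^2^2) \<times> (int^2)) \<times> ((int^2^2) \<times> (int^2)) \<Rightarrow> int) set" where
  "H2_section C = H2_class Jacobi (jacobi_heis_multiple (H2_commutator C))"

lemma H2_section_hom: "H2_section \<in> hom (H2 Zsq) (H2 Jacobi)"
proof (rule homI)
  fix C assume "C \<in> carrier (H2 Zsq)"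
  show "H2_section C \<in> carrier (H2 Jacobi)"
    using cocycle2_jacobi_heis_multiple by (auto simp: H2_section_def carrier_H2)
next
  fix C D assume "C \<in> carrier (H2 Zsq)" "D \<in> carrier (H2 Zsq)"
  then obtain f f' where f: "cocycle2 Zsq f" "C = H2_class Zsq f"
    and f': "cocycle2 Zsq f'" "D = H2_class Zsq f'" by (auto simp: carrier_H2)
  have ff': "cocycle2 Zsq (f \<otimes>\<^bsub>Z2grp Zsq\<^esub> f')"
  proof -
    interpret Z: comm_group "Z2grp Zsq" by (rule comm_group_Z2grp[OF monoid_Zsq])
    show ?thesis using Z.m_closed[of f f'] f f' by simp
  qed
  have "cocycle_commutator (f \<otimes>\<^bsub>Z2grp Zsq\<^esub> f') = cocycle_commutator f + cocycle_commutator f'"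
    by (simp add: cocycle_commutator_def)
  moreover have "jacobi_heis_multiple (k + k')
      = jacobi_heis_multiple k \<otimes>\<^bsub>Z2grp Jacobi\<^esub> jacobi_heis_multiple k'" for k k'
    by (auto simp: jacobi_heis_multiple_def fun_eq_iff algebra_simps)
  ultimately show "H2_section (C \<otimes>\<^bsub>H2 Zsq\<^esub> D) = H2_section C \<otimes>\<^bsub>H2 Jacobi\<^esub> H2_section D"
    unfolding f(2) f'(2) mult_H2_class[OF monoid_Zsq f(1) f'(1)] H2_section_def
      H2_commutator_class[OF f(1)] H2_commutator_class[OF f'(1)] H2_commutator_class[OF ff']
    by (simp add: mult_H2_class[OF monoid_Jacobi cocycle2_jacobi_heis_multiple
        cocycle2_jacobi_heis_multiple])
qed

lemma H2_section_inverse: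
  assumes "C \<in> carrier (H2 Zsq)"
  shows "H2_map Zsq iJ (H2_section C) = C"
proof -
  obtain f where f: "cocycle2 Zsq f" "C = H2_class Zsq f"
    using assms by (auto simp: carrier_H2)
  let ?k = "cocycle_commutator f"
  have "coboundary Zsq (\<lambda>(x, y). f (x, y) - ?k * heis_form x y)"
    using f(1) by (intro cocycle_Zsq_cohomologous_heis_form) (simp add: cocycle2_iff)
  then have "coboundary Zsq (\<lambda>p. 0 - (\<lambda>(x, y). f (x, y) - ?k * heis_form x y) p)"
    by (rule coboundary_diff[OF coboundary_const])
  then have "coboundary Zsq (\<lambda>p. pull2 Zsq iJ (jacobi_heis_multiple ?k) p - f p)"
    by (rule coboundary_cong) (simp add: jacobi_heis_multiple_def iJ_def)
  then show ?thesis
    using f H2_class_eq_iff[OF monoid_Zsq f(1)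
        cocycle2_pull2[OF monoid_Zsq iJ_hom cocycle2_jacobi_heis_multiple]]
    by (simp add: H2_section_def H2_commutator_class
        H2_map_class[OF monoid_Zsq monoid_Jacobi iJ_hom cocycle2_jacobi_heis_multiple])
qed

theorem theorem5:
  shows "H2_map Jacobi rhoJ \<in> hom (H2 SL2Z) (H2 Jacobi)
    \<and> H2_map Zsq iJ \<in> hom (H2 Jacobi) (H2 Zsq)
    \<and> inj_on (H2_map Jacobi rhoJ) (carrier (H2 SL2Z))
    \<and> H2_map Jacobi rhoJ ` carrier (H2 SL2Z) = kernel (H2 Jacobi) (H2 Zsq) (H2_map Zsq iJ)
    \<and> H2_map Zsq iJ ` carrier (H2 Jacobi) = carrier (H2 Zsq)
    \<and> (\<exists>s \<in> hom (H2 Zsq) (H2 Jacobi). \<forall>c \<in> carrier (H2 Zsq). H2_map Zsq iJ (s c) = c)"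
proof (intro conjI)
  show i_hom: "H2_map Zsq iJ \<in> hom (H2 Jacobi) (H2 Zsq)"
    by (rule H2_map_hom[OF monoid_Zsq monoid_Jacobi iJ_hom])
  show "H2_map Jacobi rhoJ \<in> hom (H2 SL2Z) (H2 Jacobi)"
    by (rule H2_map_hom[OF monoid_Jacobi monoid_SL2Z rhoJ_hom])
  show "inj_on (H2_map Jacobi rhoJ) (carrier (H2 SL2Z))"
    by (rule inj_on_H2_map_of_retraction[OF monoid_Jacobi monoid_SL2Z rhoJ_hom sigmaJ_hom])
      (simp add: rhoJ_def sigmaJ_def)
  show "H2_map Jacobi rhoJ ` carrier (H2 SL2Z) = kernel (H2 Jacobi) (H2 Zsq) (H2_map Zsq iJ)"
    using H2_map_image_subset_kernel[OF monoid_Zsq monoid_Jacobi monoid_SL2Z iJ_hom rhoJ_hom]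
      H2_kernel_subset_image by (simp add: rhoJ_def iJ_def)
  show "H2_map Zsq iJ ` carrier (H2 Jacobi) = carrier (H2 Zsq)"
    using i_hom H2_section_hom H2_section_inverse
    by (auto simp: hom_in_carrier intro!: image_eqI[where x = "H2_section _"])
  show "\<exists>s \<in> hom (H2 Zsq) (H2 Jacobi). \<forall>c \<in> carrier (H2 Zsq). H2_map Zsq iJ (s c) = c"
    using H2_section_hom H2_section_inverse by blast
qed

end
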